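(* If the Markov random cocycle $(\underline{A},P,q)$ has both singular (rank one) and invertible components and $P$ is primitive, then the Markov operator $\mathcal{Q}$ admits a unique stationary probability measure on $\mathscr{A}\times\mathbb{P}^1$ (namely the measure $\eta$ of Proposition 2.1).
   Context: $\mathscr{A}=\{1,\dots,k\}=\mathscr{A}_{\mathrm{sing}}\sqcup\mathscr{A}_{\mathrm{inv}}$ both nonempty, $\mathrm{rank}A_i=1$ for $i\in\mathscr{A}_{\mathrm{sing}}$, $A_i$ invertible for $i\in\mathscr{A}_{\mathrm{inv}}$. $P=(p_{ij})$ primitive left stochastic ($p_{ij}$ = probability of $j\to i$), $Pq=q$. Projective action of a rank one matrix is the constant map to its range. $(\mathcal{Q}\varphi)(j,\hat v)=\sum_i\varphi(i,\hat A_i\hat v)p_{ij}$ on bounded measurable $\varphi$; stationary means $\int\mathcal{Q}\varphi\,d\eta=\int\varphi\,d\eta$ for all such $\varphi$. The measure of Proposition 2.1 is $\eta=\sum_jq_j\delta_j\times\eta_j$, $\eta_j=\frac1{q_j}\sum_{s\in\mathscr{A}_{\mathrm{sing}}}q_s\sum_{n\ge1}\sum_{\underline\omega\in\mathscr{B}_n(s,j)}p(\underline\omega)\delta_{\hat A^n(\underline\omega)\hat r_s}$, where $\mathscr{B}_n(s,j)$ are words $(\omega_0,\dots,\omega_n)$ with $\omega_0=s,\omega_n=j$ and interior letters in $\mathscr{A}_{\mathrm{inv}}$, $A^n(\underline\omega)=A_{\omega_n}\cdots A_{\omega_1}$, $p(\underline\omega)=\prod_{l=1}^np_{\omega_l\omega_{l-1}}$,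 $r_s$ the range of $A_s$. *)

theory Defs
  imports "HOL-Analysis.Analysis" "HOL-Probability.Probability"
begin

section \<open>Projective line P^1, modelled by angles in [0, pi)\<close>

definition dir :: "real \<Rightarrow> real^2" where
  "dir \<theta> = vector [cos \<theta>, sin \<theta>]"

definition proj :: "real^2 \<Rightarrow> real" where
  "proj v = (THE \<theta>. 0 \<le> \<theta> \<and> \<theta> < pi \<and> (\<exists>c. c \<noteq> 0 \<and> v = c *\<^sub>R dir \<theta>))"

definition range_pt :: "real^2^2 \<Rightarrow> real" where
  "range_pt A = proj (SOME v. v \<noteq> 0 \<and> v \<in> range (\<lambda>x. A *v x))"

definition pact :: "real^2^2 \<Rightarrow> real \<Rightarrow> real" where
  "pact A \<theta> = (if rank A = 1 then range_pt A else proj (A *v dir \<theta>))"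

fun mpow :: "nat \<Rightarrow> (nat \<Rightarrow> nat \<Rightarrow> real) \<Rightarrow> nat \<Rightarrow> nat \<Rightarrow> nat \<Rightarrow> real" where
  "mpow k P 0 = (\<lambda>i j. if i = j then 1 else 0)"
| "mpow k P (Suc m) = (\<lambda>i j. \<Sum>l\<in>{1..k}. P i l * mpow k P m l j)"

text \<open>Left stochastic: nonnegative entries, columns sum to 1 (p_ij = prob. of j -> i).\<close>
definition left_stochastic :: "nat \<Rightarrow> (nat \<Rightarrow> nat \<Rightarrow> real) \<Rightarrow> bool" where
  "left_stochastic k P \<longleftrightarrow>
     (\<forall>i\<in>{1..k}. \<forall>j\<in>{1..k}. 0 \<le> P i j) \<and> (\<forall>j\<in>{1..k}. (\<Sum>i\<in>{1..k}. P i j) = 1)"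

definition primitive :: "nat \<Rightarrow> (nat \<Rightarrow> nat \<Rightarrow> real) \<Rightarrow> bool" where
  "primitive k P \<longleftrightarrow> (\<exists>m. \<forall>i\<in>{1..k}. \<forall>j\<in>{1..k}. mpow k P m i j > 0)"

definition state_space :: "nat \<Rightarrow> (nat \<times> real) measure" where
  "state_space k = count_space {1..k} \<Otimes>\<^sub>M restrict_space borel {0..<pi}"

definition Qop :: "nat \<Rightarrow> (nat \<Rightarrow> real^2^2) \<Rightarrow> (nat \<Rightarrow> nat \<Rightarrow> real)
                  \<Rightarrow> (nat \<times> real \<Rightarrow> real) \<Rightarrow> nat \<times> real \<Rightarrow> real" where
  "Qop k A P \<phi> = (\<lambda>(j, \<theta>). \<Sum>i\<in>{1..k}. \<phi> (i, pact (A i) \<theta>) * P i j)"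

definition stationary :: "nat \<Rightarrow> (nat \<Rightarrow> real^2^2) \<Rightarrow> (nat \<Rightarrow> nat \<Rightarrow> real)
                  \<Rightarrow> (nat \<times> real) measure \<Rightarrow> bool" where
  "stationary k A P \<mu> \<longleftrightarrow>
     (\<forall>\<phi> \<in> borel_measurable (state_space k).
        (\<exists>B. \<forall>x\<in>space (state_space k). \<bar>\<phi> x\<bar> \<le> B) \<longrightarrow>
        (\<integral>x. Qop k A P \<phi> x \<partial>\<mu>) = (\<integral>x. \<phi> x \<partial>\<mu>))"

definition stationary_prob :: "nat \<Rightarrow> (nat \<Rightarrow> real^2^2) \<Rightarrow> (nat \<Rightarrow> nat \<Rightarrow> real)
                  \<Rightarrow> (nat \<times> real) measure \<Rightarrow> bool" where
  "stationary_prob k A P \<mu> \<longleftrightarrow>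
     sets \<mu> = sets (state_space k) \<and> prob_space \<mu> \<and> stationary k A P \<mu>"

text \<open>Words (omega_0,...,omega_n), n >= 1, omega_0 singular, omega_n in A,
  interior letters invertible; stored as lists of length n+1.\<close>
definition words :: "nat \<Rightarrow> nat set \<Rightarrow> nat set \<Rightarrow> nat list set" where
  "words k Sing Inv = {w. 2 \<le> length w \<and> hd w \<in> Sing \<and> last w \<in> {1..k} \<and>
                          (\<forall>l. 0 < l \<and> l < length w - 1 \<longrightarrow> w ! l \<in> Inv)}"

definition wprob :: "(nat \<Rightarrow> nat \<Rightarrow> real) \<Rightarrow> nat list \<Rightarrow> real" where
  "wprob P w = (\<Prod>l\<in>{1..<length w}. P (w ! l) (w ! (l - 1)))"

definition wpoint :: "(nat \<Rightarrow> real^2^2) \<Rightarrow> nat list \<Rightarrow> real" where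
  "wpoint A w = foldl (\<lambda>\<theta> i. pact (A i) \<theta>) (range_pt (A (hd w))) (tl w)"

text \<open>eta = sum_j q_j delta_j x eta_j
      = sum over words omega of q_{omega_0} p(omega) delta_(omega_n, hat A^n(omega) hat r_{omega_0}).\<close>
definition eta :: "nat \<Rightarrow> nat set \<Rightarrow> nat set \<Rightarrow> (nat \<Rightarrow> real^2^2) \<Rightarrow> (nat \<Rightarrow> nat \<Rightarrow> real)
                  \<Rightarrow> (nat \<Rightarrow> real) \<Rightarrow> (nat \<times> real) measure" where
  "eta k Sing Inv A P q =
     distr (density (count_space (words k Sing Inv)) (\<lambda>w. ennreal (q (hd w) * wprob P w)))
           (state_space k) (\<lambda>w. (last w, wpoint A w))"

end

theory Submission
  imports Defs
begin

text \<open>Under a stationary probability \<open>\<mu>\<close> the letter is distributed according to \<open>q\<close>, the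
  unique stationary vector of the primitive matrix \<open>P\<close>. Split \<open>\<Q>\<close> according to whether the next
  letter is invertible or singular; a jump into a singular letter \<open>s\<close> forgets the angle and
  lands at \<open>r\<^sub>s\<close>. Hence \<open>\<integral>\<psi> d\<mu> = \<Sum>\<^sub>s q\<^sub>s \<psi>(s, r\<^sub>s) + \<integral>\<Q>\<^sub>i\<^sub>n\<^sub>v\<psi> d\<mu>\<close>, and iterating expresses
  \<open>\<integral>\<phi> d\<mu>\<close> as a series over words \<open>s i\<^sub>1 \<dots> i\<^sub>m\<close> that does not depend on \<open>\<mu>\<close>: the remainder
  vanishes because, by primitivity, the chain enters a singular letter with probability one.
  This gives uniqueness. Conversely, \<open>\<integral>\<phi> d\<eta>\<close> is the same series evaluated at \<open>\<Q>\<phi>\<close>, and a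
  Kac-type telescoping identity shows that the series is invariant under \<open>\<Q>\<close>, so \<open>\<eta>\<close> is
  stationary.\<close>

section \<open>Stochastic matrices\<close>

lemma left_stochastic_nonneg:
  "left_stochastic k P \<Longrightarrow> i \<in> {1..k} \<Longrightarrow> j \<in> {1..k} \<Longrightarrow> 0 \<le> P i j"
  unfolding left_stochastic_def by auto

lemma left_stochastic_col_sum:
  "left_stochastic k P \<Longrightarrow> j \<in> {1..k} \<Longrightarrow> (\<Sum>i\<in>{1..k}. P i j) = 1"
  unfolding left_stochastic_def by auto

lemma mpow_nonneg:
  assumes "left_stochastic k P" "i \<in> {1..k}" "j \<in> {1..k}"
  shows "0 \<le> mpow k P n i j"
  using assms(2)
proof (induction n arbitrary: i)
  case (Suc n)
  then show ?case
    by (simp, intro sum_nonneg mult_nonneg_nonneg)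
       (auto intro: left_stochastic_nonneg[OF assms(1)])
qed (simp add: assms)

lemma mpow_col_sum:
  assumes P: "left_stochastic k P" and j: "j \<in> {1..k}"
  shows "(\<Sum>i\<in>{1..k}. mpow k P n i j) = 1"
proof (induction n)
  case 0
  then show ?case using j by (simp add: sum.delta')
next
  case (Suc n)
  have "(\<Sum>i\<in>{1..k}. mpow k P (Suc n) i j) = (\<Sum>i\<in>{1..k}. \<Sum>l\<in>{1..k}. P i l * mpow k P n l j)"
    by simp
  also have "\<dots> = (\<Sum>l\<in>{1..k}. (\<Sum>i\<in>{1..k}. P i l) * mpow k P n l j)"
    by (subst sum.swap) (simp add: sum_distrib_right)
  also have "\<dots> = (\<Sum>l\<in>{1..k}. mpow k P n l j)"
    by (rule sum.cong[OF refl]) (metis P left_stochastic_col_sum mult_1)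
  finally show ?case using Suc by simp
qed

lemma mpow_fixed_vector:
  assumes d: "\<And>i. i \<in> {1..k} \<Longrightarrow> (\<Sum>j\<in>{1..k}. P i j * d j) = d i" and i: "i \<in> {1..k}"
  shows "(\<Sum>j\<in>{1..k}. mpow k P n i j * d j) = d i"
  using i
proof (induction n arbitrary: i)
  case 0
  have "(\<Sum>j\<in>{1..k}. mpow k P 0 i j * d j) = (\<Sum>j\<in>{1..k}. if i = j then d j else 0)"
    by (intro sum.cong) auto
  then show ?case using 0 by (simp add: sum.delta)
next
  case (Suc n)
  have "(\<Sum>j\<in>{1..k}. mpow k P (Suc n) i j * d j) = (\<Sum>j\<in>{1..k}. \<Sum>l\<in>{1..k}. P i l * mpow k P n l j * d j)"
    by (simp add: sum_distrib_right)
  also have "\<dots> = (\<Sum>l\<in>{1..k}. P i l * (\<Sum>j\<in>{1..k}. mpow k P n l j * d j))"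
    by (subst sum.swap) (simp add: sum_distrib_left mult.assoc)
  also have "\<dots> = (\<Sum>l\<in>{1..k}. P i l * d l)"
    using Suc.IH by simp
  finally show ?case using d Suc.prems by simp
qed

lemma primitive_mpow_pos_Suc:
  assumes "primitive k P" "i \<in> {1..k}" "j \<in> {1..k}" "i \<noteq> j"
  obtains m where "\<forall>i\<in>{1..k}. \<forall>j\<in>{1..k}. 0 < mpow k P (Suc m) i j"
proof -
  obtain m where m: "\<forall>i\<in>{1..k}. \<forall>j\<in>{1..k}. 0 < mpow k P m i j"
    using assms(1) unfolding primitive_def by blast
  have "m \<noteq> 0"
  proof
    assume "m = 0"
    then show False using m assms(2-4) by (metis less_irrefl mpow.simps(1))
  qed
  with m that show ?thesis by (metis not0_implies_Suc)
qed

text \<open>If \<open>d\<close> had entries of both signs, the triangle inequality would be strict in every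
  row of \<open>M d = d\<close>; summing over the rows contradicts the column sums being one.\<close>
lemma positive_stochastic_fixed_vector_zero:
  fixes M :: "'a \<Rightarrow> 'a \<Rightarrow> real"
  assumes I: "finite I"
    and pos: "\<And>i j. i \<in> I \<Longrightarrow> j \<in> I \<Longrightarrow> 0 < M i j"
    and col: "\<And>j. j \<in> I \<Longrightarrow> (\<Sum>i\<in>I. M i j) = 1"
    and fixed: "\<And>i. i \<in> I \<Longrightarrow> (\<Sum>j\<in>I. M i j * d j) = d i"
    and zero_sum: "(\<Sum>j\<in>I. d j) = 0"
    and j: "j \<in> I"
  shows "d j = 0"
proof (rule ccontr)
  assume "d j \<noteq> 0"
  have not_one_sign: "\<exists>j\<in>I. 0 < \<sigma> * d j" if "\<sigma> = 1 \<or> \<sigma> = -1" for \<sigma> :: real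
  proof (rule ccontr)
    assume none: "\<not> (\<exists>j\<in>I. 0 < \<sigma> * d j)"
    then have "\<forall>j\<in>I. 0 \<le> - \<sigma> * d j" by (auto simp: not_less)
    moreover have "0 < - \<sigma> * d j" using none \<open>d j \<noteq> 0\<close> j that by force
    ultimately have "0 < (\<Sum>j\<in>I. - \<sigma> * d j)"
      using I j by (intro sum_pos2) auto
    then show False using zero_sum by (simp add: sum_negf sum_distrib_left[symmetric])
  qed
  obtain jp jn where jp: "jp \<in> I" "0 < d jp" and jn: "jn \<in> I" "d jn < 0"
    using not_one_sign[of 1] not_one_sign[of "-1"] by auto
  have strict: "\<bar>d i\<bar> < (\<Sum>j\<in>I. M i j * \<bar>d j\<bar>)" if i: "i \<in> I" for i
  proof -
    obtain \<sigma> :: real where \<sigma>: "\<sigma> = 1 \<or> \<sigma> = -1" "\<bar>d i\<bar> = \<sigma> * d i"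
      by (metis abs_of_neg abs_of_nonneg mult_1 mult_minus1 not_less)
    obtain l where l: "l \<in> I" "\<sigma> * d l < 0"
      using \<sigma>(1) jp jn by (auto intro: that[of jn] that[of jp])
    have "0 < (\<Sum>j\<in>I. M i j * (\<bar>d j\<bar> - \<sigma> * d j))"
    proof (rule sum_pos2[OF I l(1)])
      show "0 < M i l * (\<bar>d l\<bar> - \<sigma> * d l)" using pos[OF i l(1)] l(2) by simp
      show "0 \<le> M i j * (\<bar>d j\<bar> - \<sigma> * d j)" if "j \<in> I" for j
        using pos[OF i that] \<sigma>(1) by (intro mult_nonneg_nonneg) (auto simp: abs_if)
    qed
    also have "\<dots> = (\<Sum>j\<in>I. M i j * \<bar>d j\<bar>) - \<bar>d i\<bar>"
      using fixed[OF i] \<sigma>(2)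
      by (simp add: right_diff_distrib sum_subtractf sum_distrib_left[symmetric] algebra_simps)
    finally show ?thesis by simp
  qed
  have "(\<Sum>i\<in>I. \<bar>d i\<bar>) < (\<Sum>i\<in>I. \<Sum>j\<in>I. M i j * \<bar>d j\<bar>)"
    using I jp(1) strict by (intro sum_strict_mono) auto
  also have "\<dots> = (\<Sum>j\<in>I. \<bar>d j\<bar>)"
    by (simp add: sum.swap[of _ I] sum_distrib_right[symmetric] col)
  finally show False by simp
qed

lemma primitive_stationary_unique:
  assumes P: "left_stochastic k P" "primitive k P"
    and \<nu>: "\<And>i. i \<in> {1..k} \<Longrightarrow> (\<Sum>j\<in>{1..k}. P i j * \<nu> j) = \<nu> i" "(\<Sum>j\<in>{1..k}. \<nu> j) = 1"
    and q: "\<And>i. i \<in> {1..k} \<Longrightarrow> (\<Sum>j\<in>{1..k}. P i j * q j) = q i" "(\<Sum>j\<in>{1..k}. q j) = 1"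
    and j: "j \<in> {1..k}"
  shows "\<nu> j = q j"
proof -
  obtain m where m: "\<forall>i\<in>{1..k}. \<forall>j\<in>{1..k}. 0 < mpow k P m i j"
    using P(2) unfolding primitive_def by blast
  have "\<nu> j - q j = 0"
  proof (rule positive_stochastic_fixed_vector_zero[where M = "mpow k P m" and I = "{1..k}"])
    show "(\<Sum>j\<in>{1..k}. mpow k P m i j * (\<nu> j - q j)) = \<nu> i - q i" if "i \<in> {1..k}" for i
      using that \<nu>(1) q(1)
      by (subst mpow_fixed_vector[of k P "\<lambda>j. \<nu> j - q j", symmetric])
         (auto simp: right_diff_distrib sum_subtractf)
  qed (use m mpow_col_sum[OF P(1)] \<nu>(2) q(2) j in \<open>auto simp: sum_subtractf\<close>)
  then show ?thesis by simp
qed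

section \<open>The projective line\<close>

lemma dir_nth [simp]: "dir t $ 1 = cos t" "dir t $ 2 = sin t"
  by (simp_all add: dir_def)

lemma vec2_eq_iff: "(v::real^2) = w \<longleftrightarrow> v $ 1 = w $ 1 \<and> v $ 2 = w $ 2"
  by (simp add: vec_eq_iff forall_2)

lemma dir_nonzero: "dir t \<noteq> 0"
proof
  assume "dir t = 0"
  then have "cos t = 0" "sin t = 0" by (auto simp: vec2_eq_iff)
  then show False using sin_cos_squared_add[of t] by simp
qed

lemma dir_multiple_unique:
  assumes "0 \<le> a" "a < pi" "0 \<le> b" "b < pi" "c \<noteq> 0"
    and eq: "c *\<^sub>R dir a = c' *\<^sub>R dir b"
  shows "a = b"
proof -
  have "c * cos a = c' * cos b" "c * sin a = c' * sin b"
    using eq by (simp_all add: vec2_eq_iff)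
  then have "c * c * sin (a - b) = 0"
    by (simp add: sin_diff algebra_simps)
  then have "sin (a - b) = 0" using assms(5) by simp
  then have "a - b = 0" using assms(1-4) by (intro sin_eq_0_pi[of "a - b"]) auto
  then show ?thesis by simp
qed

text \<open>An explicit formula for \<^const>\<open>proj\<close> on nonzero vectors, which makes the measurability
  of the projective action evident.\<close>
definition angle_of :: "real^2 \<Rightarrow> real" where
  "angle_of v = (if v $ 2 = 0 then 0 else pi/2 - arctan (v $ 1 / v $ 2))"

lemma angle_of_spec:
  assumes "v \<noteq> 0"
  shows "0 \<le> angle_of v \<and> angle_of v < pi \<and> (\<exists>c. c \<noteq> 0 \<and> v = c *\<^sub>R dir (angle_of v))"
proof (cases "v $ 2 = 0")
  case True
  then have "v $ 1 \<noteq> 0" "v = (v $ 1) *\<^sub>R dir 0" using assms by (auto simp: vec2_eq_iff)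
  then show ?thesis using True by (auto simp: angle_of_def)
next
  case False
  define x where "x = v $ 1 / v $ 2"
  have t: "angle_of v = pi/2 - arctan x" using False by (simp add: angle_of_def x_def)
  have "sqrt (1 + x\<^sup>2) > 0" by (simp add: add_pos_nonneg)
  moreover have "cos (pi/2 - arctan x) = x / sqrt (1 + x\<^sup>2)" "sin (pi/2 - arctan x) = 1 / sqrt (1 + x\<^sup>2)"
    by (simp_all add: cos_diff sin_diff sin_arctan cos_arctan)
  ultimately have "v = (v $ 2 * sqrt (1 + x\<^sup>2)) *\<^sub>R dir (angle_of v)" "v $ 2 * sqrt (1 + x\<^sup>2) \<noteq> 0"
    using False by (simp_all add: t vec2_eq_iff x_def)
  moreover have "0 \<le> angle_of v" "angle_of v < pi"
    using arctan_bounded[of x] by (auto simp: t)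
  ultimately show ?thesis by blast
qed

lemma proj_eq_angle_of: "v \<noteq> 0 \<Longrightarrow> proj v = angle_of v"
  unfolding proj_def
proof (rule the_equality)
  assume v: "v \<noteq> 0"
  show "0 \<le> angle_of v \<and> angle_of v < pi \<and> (\<exists>c. c \<noteq> 0 \<and> v = c *\<^sub>R dir (angle_of v))"
    by (rule angle_of_spec[OF v])
  fix t assume t: "0 \<le> t \<and> t < pi \<and> (\<exists>c. c \<noteq> 0 \<and> v = c *\<^sub>R dir t)"
  then obtain c where "c \<noteq> 0" "v = c *\<^sub>R dir t" by blast
  moreover obtain c' where "v = c' *\<^sub>R dir (angle_of v)" using angle_of_spec[OF v] by blast
  ultimately show "t = angle_of v"
    using t angle_of_spec[OF v] by (intro dir_multiple_unique[of t "angle_of v" c c']) auto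
qed

lemma proj_in_range: "v \<noteq> 0 \<Longrightarrow> proj v \<in> {0..<pi}"
  using proj_eq_angle_of angle_of_spec by fastforce

lemma proj_eq_if: "proj v = (if v $ 1 = 0 \<and> v $ 2 = 0 then proj 0 else angle_of v)"
  using proj_eq_angle_of[of v] vec2_eq_iff[of v 0] by (cases "v = 0") auto

lemma range_pt_in_range:
  assumes "rank A = 1"
  shows "range_pt A \<in> {0..<pi}"
proof -
  have "A \<noteq> 0" using assms rank_eq_0[of A] by auto
  then obtain x where "A *v x \<noteq> 0" using matrix_eq[of A 0] by auto
  then have "\<exists>v. v \<noteq> 0 \<and> v \<in> range (\<lambda>x. A *v x)" by blast
  then have "(SOME v. v \<noteq> 0 \<and> v \<in> range (\<lambda>x. A *v x)) \<noteq> 0" by (rule someI2_ex) auto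
  then show ?thesis unfolding range_pt_def by (rule proj_in_range)
qed

lemma pact_in_range:
  assumes "rank A = 1 \<or> invertible A"
  shows "pact A t \<in> {0..<pi}"
proof (cases "rank A = 1")
  case False
  then have "A *v dir t \<noteq> 0"
    using assms dir_nonzero inj_matrix_vector_mult[of A] by (metis injD matrix_vector_mult_0_right)
  then show ?thesis using False proj_in_range by (simp add: pact_def)
qed (use range_pt_in_range in \<open>simp add: pact_def\<close>)

lemma matrix_vector_mult_dir_nth: "(A *v dir t) $ i = A $ i $ 1 * cos t + A $ i $ 2 * sin t"
  by (simp add: matrix_vector_mult_def sum_2)

lemma borel_measurable_pact [measurable]: "pact A \<in> borel_measurable borel"
proof (cases "rank A = 1")
  case False
  define x y where "x t = A $ 1 $ 1 * cos t + A $ 1 $ 2 * sin t"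
    and "y t = A $ 2 $ 1 * cos t + A $ 2 $ 2 * sin t" for t
  have [measurable]: "x \<in> borel_measurable borel" "y \<in> borel_measurable borel"
    unfolding x_def y_def by measurable
  have "pact A = (\<lambda>t. if x t = 0 \<and> y t = 0 then proj 0
      else if y t = 0 then 0 else pi/2 - arctan (x t / y t))"
  proof
    fix t
    show "pact A t = (if x t = 0 \<and> y t = 0 then proj 0
      else if y t = 0 then 0 else pi/2 - arctan (x t / y t))"
      using proj_eq_if[of "A *v dir t"] False
      by (simp add: pact_def angle_of_def matrix_vector_mult_dir_nth x_def y_def)
  qed
  also have "\<dots> \<in> borel_measurable borel" by measurable
  finally show ?thesis .
next
  case True
  then have "pact A = (\<lambda>_. range_pt A)" by (simp add: pact_def fun_eq_iff)
  then show ?thesis by simp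
qed

section \<open>The state space and the Markov operator\<close>

lemma space_state_space [simp]: "space (state_space k) = {1..k} \<times> {0..<pi}"
  by (simp add: state_space_def space_pair_measure space_restrict_space)

lemma sets_state_space_fibre: "j \<in> {1..k} \<Longrightarrow> {j} \<times> {0..<pi} \<in> sets (state_space k)"
  unfolding state_space_def by (rule pair_measureI) (auto simp: sets_restrict_space)

lemma measurable_state_space_fst [measurable]:
  "(\<lambda>x. h (fst x) :: real) \<in> borel_measurable (state_space k)"
  unfolding state_space_def by (rule measurable_compose[OF measurable_fst]) simp

lemma measurable_pact_restrict:
  assumes "rank A = 1 \<or> invertible A"
  shows "pact A \<in> restrict_space borel {0..<pi} \<rightarrow>\<^sub>M restrict_space borel {0..<pi}"
  using pact_in_range[OF assms]
  by (intro measurable_restrict_space2 measurable_restrict_space1 borel_measurable_pact) auto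

lemma measurable_Qop:
  assumes A: "\<forall>i\<in>{1..k}. rank (A i) = 1 \<or> invertible (A i)"
    and \<phi>: "\<phi> \<in> borel_measurable (state_space k)"
  shows "Qop k A P \<phi> \<in> borel_measurable (state_space k)"
proof -
  have step: "(\<lambda>x. (i, pact (A i) (snd x))) \<in> state_space k \<rightarrow>\<^sub>M state_space k" if "i \<in> {1..k}" for i
    unfolding state_space_def
    using that A measurable_compose[OF measurable_snd measurable_pact_restrict[of "A i"]]
    by (intro measurable_Pair) auto
  have "Qop k A P \<phi> = (\<lambda>x. \<Sum>i\<in>{1..k}. \<phi> (i, pact (A i) (snd x)) * P i (fst x))"
    by (auto simp: Qop_def fun_eq_iff)
  also have "\<dots> \<in> borel_measurable (state_space k)"
    using measurable_compose[OF step \<phi>] by (intro borel_measurable_sum borel_measurable_times) auto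
  finally show ?thesis .
qed

lemma Qop_bounded:
  assumes P: "left_stochastic k P" and A: "\<forall>i\<in>{1..k}. rank (A i) = 1 \<or> invertible (A i)"
    and B: "\<And>x. x \<in> space (state_space k) \<Longrightarrow> \<bar>\<phi> x\<bar> \<le> B"
    and x: "x \<in> space (state_space k)"
  shows "\<bar>Qop k A P \<phi> x\<bar> \<le> B"
proof -
  obtain j t where x: "x = (j, t)" and j: "j \<in> {1..k}" using x by auto
  have "\<bar>Qop k A P \<phi> x\<bar> \<le> (\<Sum>i\<in>{1..k}. \<bar>\<phi> (i, pact (A i) t) * P i j\<bar>)"
    unfolding x Qop_def by (simp add: sum_abs)
  also have "\<dots> = (\<Sum>i\<in>{1..k}. \<bar>\<phi> (i, pact (A i) t)\<bar> * P i j)"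
    using left_stochastic_nonneg[OF P _ j] by (intro sum.cong) (auto simp: abs_mult)
  also have "\<dots> \<le> (\<Sum>i\<in>{1..k}. B * P i j)"
    using B A pact_in_range left_stochastic_nonneg[OF P _ j]
    by (intro sum_mono mult_right_mono) auto
  also have "\<dots> = B"
    using left_stochastic_col_sum[OF P j] by (simp add: sum_distrib_left[symmetric])
  finally show ?thesis .
qed

lemma stationaryD:
  assumes "stationary k A P \<mu>" "\<phi> \<in> borel_measurable (state_space k)"
    and "\<And>x. x \<in> space (state_space k) \<Longrightarrow> \<bar>\<phi> x\<bar> \<le> B"
  shows "(\<integral>x. Qop k A P \<phi> x \<partial>\<mu>) = (\<integral>x. \<phi> x \<partial>\<mu>)"
proof -
  have "\<exists>B. \<forall>x\<in>space (state_space k). \<bar>\<phi> x\<bar> \<le> B" using assms(3) by blast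
  then show ?thesis using assms(1,2) unfolding stationary_def by blast
qed

lemma Qop_fst: "Qop k A P (\<lambda>x. h (fst x)) (j, t) = (\<Sum>i\<in>{1..k}. P i j * h i)"
  by (simp add: Qop_def mult.commute)

lemma integral_state_space_fst:
  assumes "finite_measure \<mu>" and sets: "sets \<mu> = sets (state_space k)"
  shows "(\<integral>x. h (fst x) \<partial>\<mu>) = (\<Sum>j\<in>{1..k}. h j * measure \<mu> ({j} \<times> {0..<pi}))"
proof -
  interpret finite_measure \<mu> by fact
  have space: "space \<mu> = {1..k} \<times> {0..<pi}"
    using sets_eq_imp_space_eq[OF sets] by simp
  have fibres: "{j} \<times> {0..<pi} \<in> sets \<mu>" if "j \<in> {1..k}" for j
    using sets_state_space_fibre[OF that] sets by simp
  have "h (fst x) = (\<Sum>j\<in>{1..k}. h j * indicator ({j} \<times> {0..<pi}) x)" if "x \<in> space \<mu>" for x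
  proof -
    have "(\<Sum>j\<in>{1..k}. h j * indicator ({j} \<times> {0..<pi}) x) = (\<Sum>j\<in>{1..k}. if j = fst x then h j else 0)"
      using that by (intro sum.cong refl) (auto simp: space indicator_def)
    then show ?thesis using that by (subst (asm) sum.delta) (auto simp: space)
  qed
  then have "(\<integral>x. h (fst x) \<partial>\<mu>) = (\<integral>x. (\<Sum>j\<in>{1..k}. h j * indicator ({j} \<times> {0..<pi}) x) \<partial>\<mu>)"
    by (intro Bochner_Integration.integral_cong) auto
  also have "\<dots> = (\<Sum>j\<in>{1..k}. \<integral>x. h j * indicator ({j} \<times> {0..<pi}) x \<partial>\<mu>)"
    using fibres by (intro Bochner_Integration.integral_sum integrable_mult_right integrable_real_indicator)
      (auto simp: less_top[symmetric])
  also have "\<dots> = (\<Sum>j\<in>{1..k}. h j * measure \<mu> ({j} \<times> {0..<pi}))"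
    using fibres by (intro sum.cong refl) simp
  finally show ?thesis .
qed

lemma integrable_state_space_bounded:
  fixes f :: "nat \<times> real \<Rightarrow> real"
  assumes "finite_measure \<mu>" "sets \<mu> = sets (state_space k)"
    and "f \<in> borel_measurable (state_space k)" "\<And>x. x \<in> space (state_space k) \<Longrightarrow> \<bar>f x\<bar> \<le> B"
  shows "integrable \<mu> f"
proof -
  interpret finite_measure \<mu> by fact
  show ?thesis
    using assms(2-4) sets_eq_imp_space_eq[OF assms(2)] measurable_cong_sets[OF assms(2) refl]
    by (intro integrable_const_bound[where B = B]) auto
qed

lemma stationary_prob_marginal:
  assumes "stationary_prob k A P \<mu>"
  defines "\<nu> \<equiv> \<lambda>j. measure \<mu> ({j} \<times> {0..<pi})"
  shows "\<And>i. i \<in> {1..k} \<Longrightarrow> (\<Sum>j\<in>{1..k}. P i j * \<nu> j) = \<nu> i" and "(\<Sum>j\<in>{1..k}. \<nu> j) = 1"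
proof -
  have sets: "sets \<mu> = sets (state_space k)" and "prob_space \<mu>" and stat: "stationary k A P \<mu>"
    using assms by (auto simp: stationary_prob_def)
  then interpret prob_space \<mu> by simp
  have fst: "(\<integral>x. h (fst x) \<partial>\<mu>) = (\<Sum>j\<in>{1..k}. h j * \<nu> j)" for h
    unfolding \<nu>_def by (rule integral_state_space_fst[OF finite_measure_axioms sets])
  show "(\<Sum>j\<in>{1..k}. \<nu> j) = 1"
    using fst[of "\<lambda>_. 1"] prob_space by simp
  fix i assume i: "i \<in> {1..k}"
  define e where "e j = (if j = i then 1 else 0 :: real)" for j
  have "Qop k A P (\<lambda>x. e (fst x)) = (\<lambda>x. P i (fst x))"
  proof
    fix x :: "nat \<times> real"
    obtain j t where x: "x = (j, t)" by (cases x)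
    have "(\<Sum>l\<in>{1..k}. P l j * e l) = (\<Sum>l\<in>{1..k}. if l = i then P l j else 0)"
      by (intro sum.cong) (auto simp: e_def)
    also have "\<dots> = P i j"
      using i by (subst sum.delta) auto
    finally have "(\<Sum>l\<in>{1..k}. P l j * e l) = P i j" .
    then show "Qop k A P (\<lambda>x. e (fst x)) x = P i (fst x)"
      by (simp add: x Qop_fst)
  qed
  then have "(\<Sum>j\<in>{1..k}. P i j * \<nu> j) = (\<integral>x. Qop k A P (\<lambda>x. e (fst x)) x \<partial>\<mu>)"
    by (simp add: fst)
  also have "\<dots> = (\<integral>x. e (fst x) \<partial>\<mu>)"
    by (rule stationaryD[OF stat measurable_state_space_fst, where B = 1]) (simp add: e_def)
  also have "\<dots> = (\<Sum>j\<in>{1..k}. if j = i then \<nu> j else 0)"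
    unfolding fst by (intro sum.cong) (auto simp: e_def)
  also have "\<dots> = \<nu> i"
    using i by (subst sum.delta) auto
  finally show "(\<Sum>j\<in>{1..k}. P i j * \<nu> j) = \<nu> i" .
qed

section \<open>The chain killed on entering the singular letters\<close>

locale killed_chain =
  fixes k :: nat and Sing Inv :: "nat set" and P :: "nat \<Rightarrow> nat \<Rightarrow> real" and q :: "nat \<Rightarrow> real"
  assumes partition: "Sing \<union> Inv = {1..k}" "Sing \<inter> Inv = {}"
    and nonempty: "Sing \<noteq> {}" "Inv \<noteq> {}"
    and stochastic: "left_stochastic k P"
    and primitive: "primitive k P"
    and q_nonneg: "\<forall>i\<in>{1..k}. 0 \<le> q i" and q_sum: "(\<Sum>i\<in>{1..k}. q i) = 1"
    and q_stationary: "\<forall>i\<in>{1..k}. (\<Sum>j\<in>{1..k}. P i j * q j) = q i"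
begin

lemma Sing_subset: "Sing \<subseteq> {1..k}" and Inv_subset: "Inv \<subseteq> {1..k}"
  using partition by auto

lemma finite_Sing [simp]: "finite Sing" and finite_Inv [simp]: "finite Inv"
  using Sing_subset Inv_subset finite_subset by blast+

lemma sum_Sing_Inv: "(\<Sum>i\<in>{1..k}. f i) = (\<Sum>i\<in>Sing. f i) + (\<Sum>i\<in>Inv. f i)"
  using partition by (metis finite_Inv finite_Sing sum.union_disjoint)

lemma P_nonneg: "i \<in> {1..k} \<Longrightarrow> j \<in> {1..k} \<Longrightarrow> 0 \<le> P i j"
  by (rule left_stochastic_nonneg[OF stochastic])

lemma P_col_sum: "j \<in> {1..k} \<Longrightarrow> (\<Sum>i\<in>{1..k}. P i j) = 1"
  by (rule left_stochastic_col_sum[OF stochastic])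

text \<open>\<^term>\<open>survival n j\<close> is the probability that the chain started at \<open>j\<close> makes its
  first \<open>n\<close> steps into invertible letters.\<close>
definition killed :: "(nat \<Rightarrow> real) \<Rightarrow> nat \<Rightarrow> real" where
  "killed f j = (\<Sum>i\<in>Inv. P i j * f i)"

definition survival :: "nat \<Rightarrow> nat \<Rightarrow> real" where
  "survival n = (killed ^^ n) (\<lambda>_. 1)"

lemma killed_iter_mono:
  assumes "\<And>i. i \<in> {1..k} \<Longrightarrow> f i \<le> g i" "j \<in> {1..k}"
  shows "(killed ^^ n) f j \<le> (killed ^^ n) g j"
  using assms(2)
proof (induction n arbitrary: j)
  case (Suc n)
  then show ?case
    using Inv_subset P_nonneg by (auto simp: killed_def intro!: sum_mono mult_left_mono)
qed (simp add: assms(1))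

lemma killed_iter_nonneg:
  assumes "\<And>i. i \<in> {1..k} \<Longrightarrow> 0 \<le> f i" "j \<in> {1..k}"
  shows "0 \<le> (killed ^^ n) f j"
  using assms(2)
proof (induction n arbitrary: j)
  case (Suc n)
  then show ?case
    using Inv_subset P_nonneg by (auto simp: killed_def intro!: sum_nonneg mult_nonneg_nonneg)
qed (simp add: assms(1))

lemma killed_iter_scale: "(killed ^^ n) (\<lambda>i. c * f i) = (\<lambda>j. c * (killed ^^ n) f j)"
  by (induction n) (simp_all add: killed_def sum_distrib_left algebra_simps)

lemma killed_iter_abs_le:
  assumes "\<And>i. i \<in> {1..k} \<Longrightarrow> \<bar>h i\<bar> \<le> H" "j \<in> {1..k}"
  shows "\<bar>(killed ^^ n) h j\<bar> \<le> H * survival n j"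
  using assms(2)
proof (induction n arbitrary: j)
  case (Suc n)
  have "\<bar>(killed ^^ Suc n) h j\<bar> \<le> (\<Sum>i\<in>Inv. P i j * \<bar>(killed ^^ n) h i\<bar>)"
    using Inv_subset P_nonneg Suc.prems
    by (auto simp: killed_def abs_mult intro!: order_trans[OF sum_abs] sum_mono)
  also have "\<dots> \<le> (\<Sum>i\<in>Inv. P i j * (H * survival n i))"
    using Inv_subset P_nonneg Suc by (auto intro!: sum_mono mult_left_mono)
  also have "\<dots> = H * survival (Suc n) j"
    by (simp add: survival_def killed_def sum_distrib_left algebra_simps)
  finally show ?case .
qed (simp add: assms(1) survival_def)

lemma killed_le_one:
  assumes "\<And>i. i \<in> {1..k} \<Longrightarrow> f i \<le> 1" "j \<in> {1..k}"
  shows "killed f j \<le> 1"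
proof -
  have "killed f j \<le> (\<Sum>i\<in>Inv. P i j)"
    using assms Inv_subset P_nonneg
    by (auto simp: killed_def intro!: sum_mono mult_left_le)
  also have "\<dots> \<le> (\<Sum>i\<in>{1..k}. P i j)"
    using assms Inv_subset P_nonneg by (intro sum_mono2) auto
  finally show ?thesis using P_col_sum[OF assms(2)] by simp
qed

lemma survival_bounds: "j \<in> {1..k} \<Longrightarrow> 0 \<le> survival n j \<and> survival n j \<le> 1"
proof (induction n arbitrary: j)
  case (Suc n)
  then show ?case
    using killed_iter_nonneg[of "\<lambda>_. 1" j "Suc n"] killed_le_one[of "survival n" j]
    by (simp add: survival_def)
qed (simp add: survival_def)

lemma killed_iter_le_mpow:
  assumes "\<And>i. i \<in> {1..k} \<Longrightarrow> 0 \<le> f i" "j \<in> {1..k}"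
  shows "(killed ^^ n) f j \<le> (\<Sum>i\<in>{1..k}. mpow k P n i j * f i)"
  using assms
proof (induction n arbitrary: f)
  case 0
  have "(\<Sum>i\<in>{1..k}. mpow k P 0 i j * f i) = (\<Sum>i\<in>{1..k}. if i = j then f i else 0)"
    by (intro sum.cong) auto
  then show ?case using 0 by (simp add: sum.delta)
next
  case (Suc n)
  have "(killed ^^ Suc n) f j = (killed ^^ n) (killed f) j"
    by (simp add: funpow_Suc_right del: funpow.simps)
  also have "\<dots> \<le> (\<Sum>l\<in>{1..k}. mpow k P n l j * killed f l)"
    using Suc Inv_subset P_nonneg
    by (intro Suc.IH) (auto simp: killed_def intro!: sum_nonneg mult_nonneg_nonneg)
  also have "\<dots> \<le> (\<Sum>l\<in>{1..k}. mpow k P n l j * (\<Sum>i\<in>{1..k}. P i l * f i))"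
    using Suc Inv_subset P_nonneg mpow_nonneg[OF stochastic]
    by (intro sum_mono mult_left_mono) (auto simp: killed_def intro!: sum_mono2 mult_nonneg_nonneg)
  also have "\<dots> = (\<Sum>l\<in>{1..k}. \<Sum>i\<in>{1..k}. P i l * mpow k P n l j * f i)"
    by (simp add: sum_distrib_left algebra_simps)
  also have "\<dots> = (\<Sum>i\<in>{1..k}. (\<Sum>l\<in>{1..k}. P i l * mpow k P n l j) * f i)"
    by (subst sum.swap) (simp add: sum_distrib_right)
  finally show ?case by simp
qed

text \<open>Primitivity lets every letter reach a fixed singular letter in \<open>p\<close> steps with
  probability bounded below, so the chain survives \<open>p\<close> steps with probability at most \<open>c < 1\<close>.\<close>
lemma survival_contracts:
  obtains p c where "c < 1" "\<And>j. j \<in> {1..k} \<Longrightarrow> survival p j \<le> c"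
proof -
  obtain s i where s: "s \<in> Sing" and "i \<in> Inv" using nonempty by blast
  then have "s \<noteq> i" "s \<in> {1..k}" "i \<in> {1..k}" using partition by auto
  then obtain m where pos: "\<forall>i\<in>{1..k}. \<forall>j\<in>{1..k}. 0 < mpow k P (Suc m) i j"
    using primitive_mpow_pos_Suc[OF primitive] by metis
  define \<delta> where "\<delta> = Min ((\<lambda>j. mpow k P (Suc m) s j) ` {1..k})"
  have "0 < \<delta>" unfolding \<delta>_def using pos \<open>s \<in> {1..k}\<close> by (subst Min_gr_iff) auto
  have "survival (Suc m) j \<le> 1 - \<delta>" if j: "j \<in> {1..k}" for j
  proof -
    have "survival (Suc m) j = (killed ^^ m) (killed (\<lambda>_. 1)) j"
      by (simp add: survival_def funpow_Suc_right del: funpow.simps)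
    also have "\<dots> \<le> (\<Sum>l\<in>{1..k}. mpow k P m l j * (\<Sum>i\<in>Inv. P i l))"
      using j Inv_subset P_nonneg
      by (intro order_trans[OF killed_iter_le_mpow]) (auto simp: killed_def intro!: sum_nonneg)
    also have "\<dots> = (\<Sum>i\<in>Inv. mpow k P (Suc m) i j)"
      by (simp add: sum_distrib_left sum_distrib_right sum.swap[of _ Inv] algebra_simps)
    also have "\<dots> = 1 - (\<Sum>i\<in>Sing. mpow k P (Suc m) i j)"
      using sum_Sing_Inv[of "\<lambda>i. mpow k P (Suc m) i j"] mpow_col_sum[OF stochastic j, of "Suc m"]
      by linarith
    also have "\<dots> \<le> 1 - mpow k P (Suc m) s j"
      using s Sing_subset j mpow_nonneg[OF stochastic] by (auto intro!: member_le_sum simp del: mpow.simps)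
    also have "\<dots> \<le> 1 - \<delta>"
      unfolding \<delta>_def using j by (simp add: Min_le)
    finally show ?thesis .
  qed
  with \<open>0 < \<delta>\<close> show ?thesis by (intro that[of "1 - \<delta>" "Suc m"]) auto
qed

lemma survival_le_power:
  assumes contr: "\<And>j. j \<in> {1..k} \<Longrightarrow> survival p j \<le> c" and j: "j \<in> {1..k}"
  shows "survival (a * p + b) j \<le> c ^ a"
  using j
proof (induction a arbitrary: j)
  case 0
  then show ?case using survival_bounds by simp
next
  case (Suc a)
  have "0 \<le> c" using survival_bounds[OF Suc.prems, of p] contr[OF Suc.prems] by linarith
  have "Suc a * p + b = (a * p + b) + p" by simp
  then have "survival (Suc a * p + b) j = (killed ^^ (a * p + b)) (survival p) j"
    by (simp only: survival_def funpow_add comp_def)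
  also have "\<dots> \<le> (killed ^^ (a * p + b)) (\<lambda>_. c * 1) j"
    using Suc.prems contr by (intro killed_iter_mono) auto
  also have "\<dots> = c * survival (a * p + b) j"
    by (simp only: killed_iter_scale survival_def)
  also have "\<dots> \<le> c * c ^ a"
    using Suc.IH[OF Suc.prems] \<open>0 \<le> c\<close> by (intro mult_left_mono)
  finally show ?case by simp
qed

lemma survival_tendsto_zero:
  assumes j: "j \<in> {1..k}"
  shows "(\<lambda>n. survival n j) \<longlonglongrightarrow> 0"
proof (rule LIMSEQ_I)
  fix \<epsilon> :: real assume "0 < \<epsilon>"
  obtain p c where c: "c < 1" and contr: "\<And>j. j \<in> {1..k} \<Longrightarrow> survival p j \<le> c"
    using survival_contracts by blast
  have "0 \<le> c" using survival_bounds[OF j, of p] contr[OF j] by linarith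
  have "0 < p"
  proof (rule ccontr)
    assume "\<not> 0 < p"
    then show False using contr[OF j] c by (simp add: survival_def)
  qed
  obtain a where a: "c ^ a < \<epsilon>" using real_arch_pow_inv[OF \<open>0 < \<epsilon>\<close> c] by blast
  have "norm (survival n j) < \<epsilon>" if "a * p \<le> n" for n
  proof -
    have "a \<le> n div p" using that \<open>0 < p\<close> by (metis div_le_mono div_mult_self_is_m)
    have "survival n j = survival (n div p * p + n mod p) j" by simp
    also have "\<dots> \<le> c ^ (n div p)" by (rule survival_le_power[OF contr j])
    also have "\<dots> \<le> c ^ a" using \<open>a \<le> n div p\<close> \<open>0 \<le> c\<close> c by (intro power_decreasing) auto
    finally show ?thesis using a survival_bounds[OF j, of n] by simp
  qed
  then show "\<exists>n0. \<forall>n\<ge>n0. norm (survival n j - 0) < \<epsilon>" by auto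
qed

lemma killed_iter_tendsto_zero:
  assumes j: "j \<in> {1..k}"
  shows "(\<lambda>n. (killed ^^ n) h j) \<longlonglongrightarrow> 0"
proof -
  define H where "H = Max ((\<lambda>i. \<bar>h i\<bar>) ` {1..k})"
  have "\<bar>h i\<bar> \<le> H" if "i \<in> {1..k}" for i
    unfolding H_def using that by (intro Max_ge) auto
  then have "norm ((killed ^^ n) h j) \<le> H * survival n j" for n
    using killed_iter_abs_le[OF _ j] by simp
  moreover have "(\<lambda>n. H * survival n j) \<longlonglongrightarrow> 0"
    by (rule tendsto_mult_right_zero[OF survival_tendsto_zero[OF j]])
  ultimately show ?thesis
    by (rule Lim_null_comparison[OF always_eventually[OF allI]])
qed

lemma sum_Inv_killed: "(\<Sum>i\<in>Inv. q i * g i) = (\<Sum>j\<in>{1..k}. q j * killed g j)"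
proof -
  have "(\<Sum>j\<in>{1..k}. q j * killed g j) = (\<Sum>j\<in>{1..k}. \<Sum>i\<in>Inv. P i j * q j * g i)"
    by (simp add: killed_def sum_distrib_left algebra_simps)
  also have "\<dots> = (\<Sum>i\<in>Inv. (\<Sum>j\<in>{1..k}. P i j * q j) * g i)"
    by (subst sum.swap) (simp add: sum_distrib_right)
  also have "\<dots> = (\<Sum>i\<in>Inv. q i * g i)"
    using q_stationary Inv_subset by (intro sum.cong) auto
  finally show ?thesis by simp
qed

text \<open>A Kac-type identity: by \<open>sum_Inv_killed\<close>, the weight that \<open>q\<close> puts on the singular
  letters after \<open>m\<close> killed steps is the decrease of the total weight in step \<open>m + 1\<close>.\<close>
lemma sum_Sing_killed_iter:
  "(\<Sum>m<n. \<Sum>s\<in>Sing. q s * (killed ^^ m) h s)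
     = (\<Sum>j\<in>{1..k}. q j * h j) - (\<Sum>j\<in>{1..k}. q j * (killed ^^ n) h j)"
proof -
  define F where "F m = (\<Sum>j\<in>{1..k}. q j * (killed ^^ m) h j)" for m
  have "(\<Sum>s\<in>Sing. q s * (killed ^^ m) h s) = F m - F (Suc m)" for m
    using sum_Sing_Inv[of "\<lambda>j. q j * (killed ^^ m) h j"] sum_Inv_killed[of "(killed ^^ m) h"]
    by (simp add: F_def)
  then have "(\<Sum>m<n. \<Sum>s\<in>Sing. q s * (killed ^^ m) h s) = F 0 - F n"
    by (simp add: sum_lessThan_telescope')
  then show ?thesis by (simp add: F_def)
qed

end

section \<open>Splitting the Markov operator at the singular letters\<close>

locale markov_cocycle = killed_chain +
  fixes A :: "nat \<Rightarrow> real^2^2"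
  assumes rank_one: "\<forall>i\<in>Sing. rank (A i) = 1"
    and invertible: "\<forall>i\<in>Inv. invertible (A i)"
begin

lemma regular: "\<forall>i\<in>{1..k}. rank (A i) = 1 \<or> invertible (A i)"
  using partition rank_one invertible by blast

lemma pact_Sing: "s \<in> Sing \<Longrightarrow> pact (A s) t = range_pt (A s)"
  using rank_one by (simp add: pact_def)

lemma range_pt_Sing: "s \<in> Sing \<Longrightarrow> (s, range_pt (A s)) \<in> space (state_space k)"
  using rank_one Sing_subset range_pt_in_range by auto

lemma pact_in_space: "i \<in> {1..k} \<Longrightarrow> (i, pact (A i) t) \<in> space (state_space k)"
  using regular pact_in_range by auto

definition Qinv :: "(nat \<times> real \<Rightarrow> real) \<Rightarrow> nat \<times> real \<Rightarrow> real" where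
  "Qinv \<phi> = (\<lambda>(j, t). \<Sum>i\<in>Inv. \<phi> (i, pact (A i) t) * P i j)"

text \<open>Jumps into a singular letter \<open>s\<close> forget the angle and land at \<^term>\<open>range_pt (A s)\<close>,
  so that part of \<^term>\<open>Qop k A P\<close> only depends on the current letter.\<close>
definition Qsing :: "(nat \<times> real \<Rightarrow> real) \<Rightarrow> nat \<Rightarrow> real" where
  "Qsing \<phi> j = (\<Sum>s\<in>Sing. \<phi> (s, range_pt (A s)) * P s j)"

lemma Qop_eq_Qinv_Qsing: "Qop k A P \<phi> (j, t) = Qinv \<phi> (j, t) + Qsing \<phi> j"
  using sum_Sing_Inv[of "\<lambda>i. \<phi> (i, pact (A i) t) * P i j"]
  by (simp add: Qop_def Qinv_def Qsing_def pact_Sing)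

lemma Qinv_eq_Qop: "Qinv \<phi> = Qop k A P (\<lambda>x. if fst x \<in> Inv then \<phi> x else 0)"
proof
  fix x :: "nat \<times> real"
  obtain j t where x: "x = (j, t)" by (cases x)
  have "Qsing (\<lambda>x. if fst x \<in> Inv then \<phi> x else 0) j = 0"
    using partition by (auto simp: Qsing_def intro!: sum.neutral)
  then show "Qinv \<phi> x = Qop k A P (\<lambda>x. if fst x \<in> Inv then \<phi> x else 0) x"
    unfolding x Qop_eq_Qinv_Qsing by (simp add: Qinv_def)
qed

lemma measurable_Qinv_iter:
  "\<phi> \<in> borel_measurable (state_space k) \<Longrightarrow> (Qinv ^^ n) \<phi> \<in> borel_measurable (state_space k)"
proof (induction n)
  case (Suc n)
  have "(\<lambda>x. if fst x \<in> Inv then (Qinv ^^ n) \<phi> x else 0)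
      = (\<lambda>x. (if fst x \<in> Inv then 1 else 0) * (Qinv ^^ n) \<phi> x)"
    by auto
  also have "\<dots> \<in> borel_measurable (state_space k)"
    by (rule borel_measurable_times[OF measurable_state_space_fst Suc.IH[OF Suc.prems]])
  finally have "Qinv ((Qinv ^^ n) \<phi>) \<in> borel_measurable (state_space k)"
    unfolding Qinv_eq_Qop[of "(Qinv ^^ n) \<phi>"] by (rule measurable_Qop[OF regular])
  then show ?case by simp
qed simp

lemma Qinv_iter_add: "(Qinv ^^ n) (\<lambda>x. \<phi> x + \<psi> x) = (\<lambda>x. (Qinv ^^ n) \<phi> x + (Qinv ^^ n) \<psi> x)"
  by (induction n) (simp_all add: Qinv_def fun_eq_iff sum.distrib algebra_simps split: prod.splits)

lemma Qinv_iter_fst: "(Qinv ^^ n) (\<lambda>x. h (fst x)) = (\<lambda>x. (killed ^^ n) h (fst x))"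
  by (induction n) (simp_all add: Qinv_def killed_def fun_eq_iff algebra_simps split: prod.splits)

lemma Qinv_iter_abs_le:
  assumes B: "\<And>x. x \<in> space (state_space k) \<Longrightarrow> \<bar>\<phi> x\<bar> \<le> B"
    and x: "x \<in> space (state_space k)"
  shows "\<bar>(Qinv ^^ n) \<phi> x\<bar> \<le> B * survival n (fst x)"
  using x
proof (induction n arbitrary: x)
  case (Suc n)
  obtain j t where x: "x = (j, t)" and j: "j \<in> {1..k}" using Suc.prems by auto
  have "\<bar>(Qinv ^^ Suc n) \<phi> x\<bar> \<le> (\<Sum>i\<in>Inv. \<bar>(Qinv ^^ n) \<phi> (i, pact (A i) t)\<bar> * P i j)"
    using Inv_subset P_nonneg j
    by (auto simp: x Qinv_def abs_mult intro!: order_trans[OF sum_abs] sum_mono)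
  also have "\<dots> \<le> (\<Sum>i\<in>Inv. B * survival n i * P i j)"
    using Inv_subset P_nonneg j Suc.IH pact_in_space
    by (intro sum_mono mult_right_mono) (auto simp del: space_state_space)
  also have "\<dots> = B * survival (Suc n) (fst x)"
    by (simp add: x survival_def killed_def sum_distrib_left algebra_simps)
  finally show ?case .
qed (use B in \<open>simp add: survival_def\<close>)

lemma Qinv_iter_bounded:
  assumes B: "\<And>x. x \<in> space (state_space k) \<Longrightarrow> \<bar>\<phi> x\<bar> \<le> B"
    and x: "x \<in> space (state_space k)"
  shows "\<bar>(Qinv ^^ n) \<phi> x\<bar> \<le> B"
proof -
  have "\<bar>(Qinv ^^ n) \<phi> x\<bar> \<le> B * survival n (fst x)" by (rule Qinv_iter_abs_le[OF B x])
  also have "\<dots> \<le> B"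
    using survival_bounds[of "fst x" n] x abs_ge_zero[of "\<phi> x"] B[OF x] by (intro mult_left_le) auto
  finally show ?thesis .
qed

text \<open>The \<open>m\<close>-th term collects the words \<open>s i\<^sub>1 \<dots> i\<^sub>m\<close> with \<open>s\<close> singular and the
  \<open>i\<^sub>l\<close> invertible; the series turns out to be the integral against every stationary
  measure, and against \<open>\<eta>\<close>.\<close>
definition eta_term :: "(nat \<times> real \<Rightarrow> real) \<Rightarrow> nat \<Rightarrow> real" where
  "eta_term \<phi> m = (\<Sum>s\<in>Sing. q s * (Qinv ^^ m) \<phi> (s, range_pt (A s)))"

definition eta_series :: "(nat \<times> real \<Rightarrow> real) \<Rightarrow> real" where
  "eta_series \<phi> = (\<Sum>m. eta_term \<phi> m)"

lemma sum_q_Qsing: "(\<Sum>j\<in>{1..k}. q j * Qsing \<phi> j) = eta_term \<phi> 0"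
proof -
  have "(\<Sum>j\<in>{1..k}. q j * Qsing \<phi> j)
      = (\<Sum>s\<in>Sing. \<phi> (s, range_pt (A s)) * (\<Sum>j\<in>{1..k}. P s j * q j))"
    unfolding Qsing_def sum_distrib_left by (subst sum.swap) (simp add: algebra_simps)
  also have "\<dots> = eta_term \<phi> 0"
    using q_stationary Sing_subset by (auto simp: eta_term_def mult.commute intro!: sum.cong)
  finally show ?thesis .
qed

lemma eta_term_one: "eta_term (\<lambda>_. 1) m = (\<Sum>s\<in>Sing. q s * survival m s)"
  using Qinv_iter_fst[of m "\<lambda>_. 1"] by (simp add: eta_term_def survival_def)

lemma eta_term_one_sums: "eta_term (\<lambda>_. 1) sums 1"
proof -
  have partial: "(\<Sum>m<n. eta_term (\<lambda>_. 1) m) = 1 - (\<Sum>j\<in>{1..k}. q j * survival n j)" for n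
    using sum_Sing_killed_iter[where n = n and h = "\<lambda>_. 1"] q_sum by (simp add: eta_term_one survival_def)
  have "(\<lambda>n. \<Sum>j\<in>{1..k}. q j * survival n j) \<longlonglongrightarrow> (\<Sum>j\<in>{1..k}. q j * 0)"
    by (intro tendsto_sum tendsto_mult tendsto_const survival_tendsto_zero) auto
  then have "(\<lambda>n. 1 - (\<Sum>j\<in>{1..k}. q j * survival n j)) \<longlonglongrightarrow> 1 - 0"
    by (intro tendsto_diff tendsto_const) simp
  then show ?thesis unfolding sums_def partial by simp
qed

lemma eta_term_sums:
  assumes B: "\<And>x. x \<in> space (state_space k) \<Longrightarrow> \<bar>\<phi> x\<bar> \<le> B"
  shows "eta_term \<phi> sums eta_series \<phi>"
proof -
  have "norm (eta_term \<phi> m) \<le> B * eta_term (\<lambda>_. 1) m" for m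
  proof -
    have "norm (eta_term \<phi> m) \<le> (\<Sum>s\<in>Sing. q s * \<bar>(Qinv ^^ m) \<phi> (s, range_pt (A s))\<bar>)"
      unfolding eta_term_def using q_nonneg Sing_subset
      by (auto simp: abs_mult intro!: order_trans[OF sum_abs] sum_mono)
    also have "\<dots> \<le> (\<Sum>s\<in>Sing. q s * (B * survival m s))"
    proof (rule sum_mono)
      fix s assume s: "s \<in> Sing"
      then show "q s * \<bar>(Qinv ^^ m) \<phi> (s, range_pt (A s))\<bar> \<le> q s * (B * survival m s)"
        using Qinv_iter_abs_le[OF B range_pt_Sing[OF s]] q_nonneg Sing_subset
        by (intro mult_left_mono) auto
    qed
    also have "\<dots> = B * eta_term (\<lambda>_. 1) m"
      by (simp add: eta_term_one sum_distrib_left algebra_simps)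
    finally show ?thesis .
  qed
  moreover have "summable (\<lambda>m. B * eta_term (\<lambda>_. 1) m)"
    using eta_term_one_sums by (intro summable_mult) (rule sums_summable)
  ultimately have "summable (eta_term \<phi>)"
    by (rule summable_comparison_test'[where N = 0, rotated])
  then show ?thesis by (simp add: eta_series_def summable_sums)
qed

lemma eta_term_Qop:
  "eta_term (Qop k A P \<phi>) m = eta_term \<phi> (Suc m) + (\<Sum>s\<in>Sing. q s * (killed ^^ m) (Qsing \<phi>) s)"
proof -
  have "Qop k A P \<phi> = (\<lambda>x. Qinv \<phi> x + Qsing \<phi> (fst x))"
    by (auto simp: fun_eq_iff Qop_eq_Qinv_Qsing)
  then have "(Qinv ^^ m) (Qop k A P \<phi>) = (\<lambda>x. (Qinv ^^ Suc m) \<phi> x + (killed ^^ m) (Qsing \<phi>) (fst x))"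
    by (simp add: Qinv_iter_add Qinv_iter_fst funpow_Suc_right del: funpow.simps)
  then show ?thesis by (simp add: eta_term_def sum.distrib algebra_simps)
qed

text \<open>Summed over \<open>m\<close>, the second terms of \<open>eta_term_Qop\<close> telescope by
  \<open>sum_Sing_killed_iter\<close> to \<^term>\<open>eta_term \<phi> 0\<close>, the term that the shift loses.\<close>
lemma eta_series_Qop:
  assumes B: "\<And>x. x \<in> space (state_space k) \<Longrightarrow> \<bar>\<phi> x\<bar> \<le> B"
  shows "eta_series (Qop k A P \<phi>) = eta_series \<phi>"
proof -
  have partial: "(\<Sum>m<n. eta_term (Qop k A P \<phi>) m)
      = (\<Sum>m<Suc n. eta_term \<phi> m) - (\<Sum>j\<in>{1..k}. q j * (killed ^^ n) (Qsing \<phi>) j)" for n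
    using sum_Sing_killed_iter[where n = n and h = "Qsing \<phi>"] sum_q_Qsing[of \<phi>]
      sum.lessThan_Suc_shift[of "eta_term \<phi>" n]
    by (simp add: eta_term_Qop sum.distrib)
  have "(\<lambda>n. \<Sum>j\<in>{1..k}. q j * (killed ^^ n) (Qsing \<phi>) j) \<longlonglongrightarrow> (\<Sum>j\<in>{1..k}. q j * 0)"
    by (intro tendsto_sum tendsto_mult tendsto_const killed_iter_tendsto_zero) auto
  moreover have "(\<lambda>n. \<Sum>m<Suc n. eta_term \<phi> m) \<longlonglongrightarrow> eta_series \<phi>"
    using LIMSEQ_Suc[OF eta_term_sums[where \<phi> = \<phi>, OF B, unfolded sums_def]] .
  ultimately have "(\<lambda>n. \<Sum>m<n. eta_term (Qop k A P \<phi>) m) \<longlonglongrightarrow> eta_series \<phi> - 0"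
    unfolding partial by (intro tendsto_diff) auto
  moreover have "(\<lambda>n. \<Sum>m<n. eta_term (Qop k A P \<phi>) m) \<longlonglongrightarrow> eta_series (Qop k A P \<phi>)"
    using eta_term_sums[where \<phi> = "Qop k A P \<phi>", OF Qop_bounded[OF stochastic regular B]]
    unfolding sums_def .
  ultimately show ?thesis using LIMSEQ_unique by fastforce
qed

section \<open>Integrals against stationary measures\<close>

lemma stationary_prob_fibre:
  assumes "stationary_prob k A P \<mu>" "j \<in> {1..k}"
  shows "measure \<mu> ({j} \<times> {0..<pi}) = q j"
  using q_stationary
  by (intro primitive_stationary_unique[OF stochastic primitive stationary_prob_marginal[OF assms(1)]
        _ q_sum assms(2)]) auto

lemma stationary_integral_step:
  assumes \<mu>: "stationary_prob k A P \<mu>" and \<psi>: "\<psi> \<in> borel_measurable (state_space k)"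
    and B: "\<And>x. x \<in> space (state_space k) \<Longrightarrow> \<bar>\<psi> x\<bar> \<le> B"
  shows "(\<integral>x. \<psi> x \<partial>\<mu>) = eta_term \<psi> 0 + (\<integral>x. Qinv \<psi> x \<partial>\<mu>)"
proof -
  have sets: "sets \<mu> = sets (state_space k)" and "prob_space \<mu>" and stat: "stationary k A P \<mu>"
    using \<mu> by (auto simp: stationary_prob_def)
  then interpret prob_space \<mu> by simp
  have "integrable \<mu> (Qop k A P \<psi>)"
    by (rule integrable_state_space_bounded[OF finite_measure_axioms sets measurable_Qop[OF regular \<psi>]
          Qop_bounded[OF stochastic regular B]])
  moreover have "integrable \<mu> ((Qinv ^^ 1) \<psi>)"
    by (rule integrable_state_space_bounded[OF finite_measure_axioms sets measurable_Qinv_iter[OF \<psi>]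
          Qinv_iter_bounded[OF B]])
  moreover have "Qop k A P \<psi> x - Qinv \<psi> x = Qsing \<psi> (fst x)" for x
    by (cases x) (simp add: Qop_eq_Qinv_Qsing)
  ultimately have "(\<integral>x. Qop k A P \<psi> x \<partial>\<mu>) - (\<integral>x. Qinv \<psi> x \<partial>\<mu>) = (\<integral>x. Qsing \<psi> (fst x) \<partial>\<mu>)"
    by (subst Bochner_Integration.integral_diff[symmetric]) simp_all
  also have "\<dots> = (\<Sum>j\<in>{1..k}. q j * Qsing \<psi> j)"
    using stationary_prob_fibre[OF \<mu>]
    by (simp add: integral_state_space_fst[OF finite_measure_axioms sets] mult.commute)
  also have "\<dots> = eta_term \<psi> 0"
    by (rule sum_q_Qsing)
  finally show ?thesis
    using stationaryD[OF stat \<psi> B] by simp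
qed

lemma integral_Qinv_iter_tendsto_zero:
  assumes "prob_space \<mu>" and sets: "sets \<mu> = sets (state_space k)"
    and \<phi>: "\<phi> \<in> borel_measurable (state_space k)"
    and B: "\<And>x. x \<in> space (state_space k) \<Longrightarrow> \<bar>\<phi> x\<bar> \<le> B"
  shows "(\<lambda>n. \<integral>x. (Qinv ^^ n) \<phi> x \<partial>\<mu>) \<longlonglongrightarrow> 0"
proof -
  interpret prob_space \<mu> by fact
  have bound: "norm (\<integral>x. (Qinv ^^ n) \<phi> x \<partial>\<mu>) \<le> B * (\<Sum>j\<in>{1..k}. survival n j)" for n
  proof -
    have "norm ((Qinv ^^ n) \<phi> x) \<le> B * (\<Sum>j\<in>{1..k}. survival n j)" if "x \<in> space \<mu>" for x
    proof -
      have x: "x \<in> space (state_space k)" using that sets_eq_imp_space_eq[OF sets] by simp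
      have "norm ((Qinv ^^ n) \<phi> x) \<le> B * survival n (fst x)"
        using Qinv_iter_abs_le[OF B x] by simp
      also have "\<dots> \<le> B * (\<Sum>j\<in>{1..k}. survival n j)"
        using x order_trans[OF abs_ge_zero B[OF x]] survival_bounds
        by (intro mult_left_mono member_le_sum) auto
      finally show ?thesis .
    qed
    moreover have "integrable \<mu> (\<lambda>x. norm ((Qinv ^^ n) \<phi> x))"
      by (intro integrable_norm integrable_state_space_bounded[OF finite_measure_axioms sets
            measurable_Qinv_iter[OF \<phi>] Qinv_iter_bounded[OF B]])
    ultimately have "(\<integral>x. norm ((Qinv ^^ n) \<phi> x) \<partial>\<mu>) \<le> B * (\<Sum>j\<in>{1..k}. survival n j)"
      by (intro integral_le_const AE_I2) auto
    then show ?thesis by (rule order_trans[OF integral_norm_bound])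
  qed
  have "(\<lambda>n. B * (\<Sum>j\<in>{1..k}. survival n j)) \<longlonglongrightarrow> B * (\<Sum>j\<in>{1..k}. 0)"
    by (intro tendsto_mult tendsto_const tendsto_sum survival_tendsto_zero) auto
  then have "(\<lambda>n. B * (\<Sum>j\<in>{1..k}. survival n j)) \<longlonglongrightarrow> 0"
    by simp
  then show ?thesis
    by (rule Lim_null_comparison[OF always_eventually[OF allI[OF bound]]])
qed

lemma stationary_integral_eq_eta_series:
  assumes \<mu>: "stationary_prob k A P \<mu>" and \<phi>: "\<phi> \<in> borel_measurable (state_space k)"
    and B: "\<And>x. x \<in> space (state_space k) \<Longrightarrow> \<bar>\<phi> x\<bar> \<le> B"
  shows "(\<integral>x. \<phi> x \<partial>\<mu>) = eta_series \<phi>"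
proof -
  have partial: "(\<Sum>m<n. eta_term \<phi> m) = (\<integral>x. \<phi> x \<partial>\<mu>) - (\<integral>x. (Qinv ^^ n) \<phi> x \<partial>\<mu>)" for n
  proof (induction n)
    case (Suc n)
    have "eta_term ((Qinv ^^ n) \<phi>) 0 = eta_term \<phi> n"
      by (simp add: eta_term_def)
    then show ?case
      using Suc stationary_integral_step[OF \<mu> measurable_Qinv_iter[OF \<phi>] Qinv_iter_bounded[OF B]]
      by simp
  qed simp
  have "(\<lambda>n. \<integral>x. (Qinv ^^ n) \<phi> x \<partial>\<mu>) \<longlonglongrightarrow> 0"
    using \<mu> by (intro integral_Qinv_iter_tendsto_zero[OF _ _ \<phi> B]) (auto simp: stationary_prob_def)
  then have "(\<lambda>n. \<Sum>m<n. eta_term \<phi> m) \<longlonglongrightarrow> (\<integral>x. \<phi> x \<partial>\<mu>) - 0"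
    unfolding partial by (intro tendsto_diff tendsto_const)
  then show ?thesis
    using eta_term_sums[where \<phi> = \<phi>, OF B] LIMSEQ_unique by (auto simp: sums_def)
qed

end

section \<open>The measure \<open>\<eta>\<close>\<close>

lemma wprob_single[simp]: "wprob P [j] = 1"
  by (simp add: wprob_def)

lemma wprob_Cons_Cons: "wprob P (j # i # ys) = P i j * wprob P (i # ys)"
proof -
  have "wprob P (j # i # ys) = (\<Prod>l\<in>{1..<Suc (Suc (length ys))}. P ((j # i # ys) ! l) ((j # i # ys) ! (l - 1)))"
    by (simp add: wprob_def)
  also have "\<dots> = P i j * (\<Prod>l\<in>{Suc 1..<Suc (Suc (length ys))}. P ((j # i # ys) ! l) ((j # i # ys) ! (l - 1)))"
    by (subst prod.atLeast_Suc_lessThan) auto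
  also have "(\<Prod>l\<in>{Suc 1..<Suc (Suc (length ys))}. P ((j # i # ys) ! l) ((j # i # ys) ! (l - 1)))
      = (\<Prod>l\<in>{1..<Suc (length ys)}. P ((j # i # ys) ! Suc l) ((j # i # ys) ! (Suc l - 1)))"
    by (rule prod.shift_bounds_Suc_ivl)
  also have "\<dots> = (\<Prod>l\<in>{1..<Suc (length ys)}. P ((i # ys) ! l) ((i # ys) ! (l - 1)))"
    by (intro prod.cong refl) (auto simp: nth_Cons split: nat.splits)
  also have "\<dots> = wprob P (i # ys)" by (simp add: wprob_def)
  finally show ?thesis .
qed

context markov_cocycle
begin

abbreviation pact_word :: "real \<Rightarrow> nat list \<Rightarrow> real" where
  "pact_word t xs \<equiv> foldl (\<lambda>\<theta> i. pact (A i) \<theta>) t xs"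

text \<open>The words of length \<open>m + 2\<close> in the definition of \<open>\<eta>\<close> are \<^term>\<open>eta_words m\<close>; their
  tails \<open>\<omega>\<^sub>1 \<dots> \<omega>\<^sub>m\<^sub>+\<^sub>1\<close>, with \<open>\<omega>\<^sub>1 \<dots> \<omega>\<^sub>m\<close> invertible, form \<^term>\<open>inv_paths m\<close>.\<close>
primrec inv_paths :: "nat \<Rightarrow> nat list set" where
  "inv_paths 0 = (\<lambda>j. [j]) ` {1..k}"
| "inv_paths (Suc m) = (\<lambda>(i, ys). i # ys) ` (Inv \<times> inv_paths m)"

lemma finite_inv_paths: "finite (inv_paths m)"
  by (induction m) auto

lemma inv_paths_iff:
  "xs \<in> inv_paths m \<longleftrightarrow> length xs = Suc m \<and> last xs \<in> {1..k} \<and> (\<forall>l<m. xs ! l \<in> Inv)"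
proof (induction m arbitrary: xs)
  case 0
  then show ?case by (cases xs) auto
next
  case (Suc m)
  show ?case
  proof (cases xs)
    case (Cons i ys)
    then have "(\<forall>l<Suc m. xs ! l \<in> Inv) \<longleftrightarrow> i \<in> Inv \<and> (\<forall>l<m. ys ! l \<in> Inv)"
      by (simp add: All_less_Suc2)
    then show ?thesis using Suc.IH[of ys] Cons by auto
  qed auto
qed

lemma inv_paths_nonempty: "xs \<in> inv_paths m \<Longrightarrow> xs \<noteq> []"
  using inv_paths_iff by fastforce

lemma set_inv_paths: "xs \<in> inv_paths m \<Longrightarrow> set xs \<subseteq> {1..k}"
proof (induction m arbitrary: xs)
  case 0 then show ?case by auto
next
  case (Suc m) then show ?case using Inv_subset by force
qed

abbreviation W :: "nat list set" where
  "W \<equiv> words k Sing Inv"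

definition eta_words :: "nat \<Rightarrow> nat list set" where
  "eta_words m = (\<lambda>(s, xs). s # xs) ` (Sing \<times> inv_paths m)"

definition word_weight :: "nat list \<Rightarrow> real" where
  "word_weight w = q (hd w) * wprob P w"

definition word_state :: "nat list \<Rightarrow> nat \<times> real" where
  "word_state w = (last w, wpoint A w)"

lemma finite_eta_words: "finite (eta_words m)"
  unfolding eta_words_def using finite_inv_paths by auto

lemma length_eta_words: "w \<in> eta_words m \<Longrightarrow> length w = Suc (Suc m)"
  unfolding eta_words_def using inv_paths_iff by auto

lemma words_eq_Union: "W = (\<Union>m. eta_words m)"
proof (intro equalityI subsetI)
  fix w assume "w \<in> W"
  then have len: "2 \<le> length w" and hd: "hd w \<in> Sing" and last: "last w \<in> {1..k}"
    and inner: "\<And>l. 0 < l \<Longrightarrow> l < length w - 1 \<Longrightarrow> w ! l \<in> Inv"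
    unfolding words_def by auto
  obtain s xs where w: "w = s # xs" "xs \<noteq> []" using len by (cases w) (auto simp: Suc_le_eq)
  have "xs ! l \<in> Inv" if "l < length xs - 1" for l
    using inner[of "Suc l"] that w by simp
  then have "xs \<in> inv_paths (length xs - 1)"
    unfolding inv_paths_iff using w last by auto
  then show "w \<in> (\<Union>m. eta_words m)"
    using w hd unfolding eta_words_def by auto
next
  fix w assume "w \<in> (\<Union>m. eta_words m)"
  then obtain m s xs where w: "w = s # xs" "s \<in> Sing" "xs \<in> inv_paths m"
    unfolding eta_words_def by auto
  then show "w \<in> W"
    unfolding words_def inv_paths_iff by (auto simp: nth_Cons' gr0_conv_Suc)
qed

lemma set_words: "w \<in> W \<Longrightarrow> set w \<subseteq> {1..k}"
proof -
  assume "w \<in> W"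
  then obtain m s xs where sxs: "w = s # xs" "s \<in> Sing" "xs \<in> inv_paths m" using words_eq_Union unfolding eta_words_def by auto
  then have "s \<in> {1..k}" using Sing_subset by auto
  then show ?thesis using sxs set_inv_paths[OF sxs(3)] by simp
qed

lemma word_weight_nonneg: "w \<in> W \<Longrightarrow> 0 \<le> word_weight w"
proof -
  assume w: "w \<in> W"
  then have "hd w \<in> Sing" unfolding words_def by auto
  then have "0 \<le> q (hd w)" using q_nonneg Sing_subset by auto
  moreover have "0 \<le> wprob P w"
    unfolding wprob_def
  proof (rule prod_nonneg)
    fix l assume l: "l \<in> {1..<length w}"
    then have "w ! l \<in> {1..k}" "w ! (l - 1) \<in> {1..k}" using set_words[OF w] nth_mem by force+
    then show "0 \<le> P (w ! l) (w ! (l - 1))" by (rule P_nonneg)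
  qed
  ultimately show ?thesis by (simp add: word_weight_def)
qed

lemma word_state_in_space: "w \<in> W \<Longrightarrow> word_state w \<in> space (state_space k)"
proof -
  assume w: "w \<in> W"
  then obtain m s xs where sxs: "w = s # xs" "s \<in> Sing" "xs \<in> inv_paths m" using words_eq_Union unfolding eta_words_def by auto
  then have xsne: "xs \<noteq> []" using inv_paths_nonempty by auto
  then obtain ys y where ys: "xs = ys @ [y]" by (metis rev_exhaust)
  have yK: "y \<in> {1..k}" using set_inv_paths[OF sxs(3)] ys by auto
  have "wpoint A w = pact (A y) (pact_word (range_pt (A s)) ys)"
    using sxs ys by (simp add: wpoint_def)
  then have "wpoint A w \<in> {0..<pi}" using pact_in_space[OF yK] by simp
  moreover have "last w \<in> {1..k}" using w unfolding words_def by auto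
  ultimately show ?thesis by (simp add: word_state_def)
qed

lemma sum_inv_paths: "(\<Sum>xs\<in>inv_paths m. wprob P (j # xs) * \<phi> (last xs, pact_word t xs))
   = (Qinv ^^ m) (Qop k A P \<phi>) (j, t)"
proof (induction m arbitrary: j t)
  case 0
  have "(\<Sum>xs\<in>inv_paths 0. wprob P (j # xs) * \<phi> (last xs, pact_word t xs))
      = (\<Sum>i\<in>{1..k}. wprob P [j, i] * \<phi> (i, pact (A i) t))"
    by (simp add: sum.reindex inj_on_def)
  also have "\<dots> = Qop k A P \<phi> (j, t)"
    by (simp add: Qop_def wprob_Cons_Cons algebra_simps)
  finally show ?case by simp
next
  case (Suc m)
  have inj: "inj_on (\<lambda>(i, ys). i # ys) (Inv \<times> inv_paths m)" by (auto simp: inj_on_def)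
  define F where "F xs = wprob P (j # xs) * \<phi> (last xs, pact_word t xs)" for xs
  have "(\<Sum>xs\<in>inv_paths (Suc m). F xs) = sum (F \<circ> (\<lambda>(i, ys). i # ys)) (Inv \<times> inv_paths m)"
    by (simp only: inv_paths.simps sum.reindex[OF inj])
  also have "\<dots> = (\<Sum>(i, ys)\<in>Inv \<times> inv_paths m. P i j * (wprob P (i # ys) * \<phi> (last ys, pact_word (pact (A i) t) ys)))"
    by (rule sum.cong) (auto simp: F_def wprob_Cons_Cons inv_paths_nonempty)
  also have "\<dots> = (\<Sum>i\<in>Inv. \<Sum>ys\<in>inv_paths m. P i j * (wprob P (i # ys) * \<phi> (last ys, pact_word (pact (A i) t) ys)))"
    by (rule sum.cartesian_product[symmetric])
  finally have eq: "(\<Sum>xs\<in>inv_paths (Suc m). F xs) = \<dots>" .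
  have "(\<Sum>xs\<in>inv_paths (Suc m). wprob P (j # xs) * \<phi> (last xs, pact_word t xs))
     = (\<Sum>i\<in>Inv. \<Sum>ys\<in>inv_paths m. P i j * (wprob P (i # ys) * \<phi> (last ys, pact_word (pact (A i) t) ys)))"
    using eq by (simp add: F_def)
  also have "\<dots> = (\<Sum>i\<in>Inv. P i j * (Qinv ^^ m) (Qop k A P \<phi>) (i, pact (A i) t))"
    by (simp add: sum_distrib_left[symmetric] Suc)
  also have "\<dots> = (Qinv ^^ Suc m) (Qop k A P \<phi>) (j, t)"
    by (simp add: Qinv_def algebra_simps)
  finally show ?case .
qed

lemma sum_eta_words: "(\<Sum>w\<in>eta_words m. word_weight w * \<phi> (word_state w)) = eta_term (Qop k A P \<phi>) m"
proof -
  have inj: "inj_on (\<lambda>(s, xs). s # xs) (Sing \<times> inv_paths m)" by (auto simp: inj_on_def)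
  have "(\<Sum>w\<in>eta_words m. word_weight w * \<phi> (word_state w))
     = (\<Sum>(s, xs)\<in>Sing \<times> inv_paths m. q s * (wprob P (s # xs) * \<phi> (last xs, pact_word (range_pt (A s)) xs)))"
    unfolding eta_words_def by (subst sum.reindex[OF inj])
       (auto simp: word_weight_def word_state_def wpoint_def inv_paths_nonempty case_prod_unfold intro!: sum.cong)
  also have "\<dots> = (\<Sum>s\<in>Sing. q s * (\<Sum>xs\<in>inv_paths m. wprob P (s # xs) * \<phi> (last xs, pact_word (range_pt (A s)) xs)))"
    by (subst sum.cartesian_product[symmetric]) (simp add: sum_distrib_left)
  also have "\<dots> = eta_term (Qop k A P \<phi>) m"
    by (simp add: sum_inv_paths eta_term_def)
  finally show ?thesis .
qed

lemma words_eq_Sigma: "W = snd ` (SIGMA m:UNIV. eta_words m)"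
  using words_eq_Union by force

lemma inj_on_snd_eta_words: "inj_on snd (SIGMA m:UNIV. eta_words m)"
  by (auto simp: inj_on_def) (metis length_eta_words Suc_inject)

lemma word_weight_summable: "word_weight summable_on W"
proof -
  have "(\<lambda>m. \<Sum>w\<in>eta_words m. word_weight w) = eta_term (Qop k A P (\<lambda>_. 1))"
    using sum_eta_words[where \<phi> = "\<lambda>_. 1"] by simp
  moreover have "summable (eta_term (Qop k A P (\<lambda>_. 1)))"
    using eta_term_sums[OF Qop_bounded[OF stochastic regular, where \<phi> = "\<lambda>_. 1" and B = 1]] by (auto simp: sums_iff)
  moreover have "0 \<le> (\<Sum>w\<in>eta_words m. word_weight w)" for m
    using word_weight_nonneg words_eq_Union by (intro sum_nonneg) auto
  ultimately have "(\<lambda>m. \<Sum>w\<in>eta_words m. word_weight w) summable_on UNIV"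
    by (subst summable_on_UNIV_nonneg_real_iff) simp_all
  then have "(\<lambda>(m, w). word_weight w) summable_on (SIGMA m:UNIV. eta_words m)"
    using word_weight_nonneg words_eq_Union finite_eta_words
    by (intro summable_on_SigmaI[where g = "\<lambda>m. \<Sum>w\<in>eta_words m. word_weight w"]) auto
  then show ?thesis
    unfolding words_eq_Sigma by (subst summable_on_reindex[OF inj_on_snd_eta_words]) (simp add: comp_def case_prod_unfold)
qed

lemma integral_count_space_words:
  assumes B: "\<And>x. x \<in> space (state_space k) \<Longrightarrow> \<bar>\<phi> x\<bar> \<le> B"
  shows "integrable (count_space W) (\<lambda>w. word_weight w * \<phi> (word_state w))"
    and "(\<integral>w. word_weight w * \<phi> (word_state w) \<partial>count_space W) = eta_series (Qop k A P \<phi>)"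
proof -
  define G where "G w = word_weight w * \<phi> (word_state w)" for w
  have norm_summable: "(\<lambda>w. norm (G w)) summable_on W"
  proof (rule summable_on_comparison_test[OF summable_on_cmult_left[OF word_weight_summable]])
    fix w assume w: "w \<in> W"
    show "norm (G w) \<le> word_weight w * \<bar>B\<bar>"
      using B[OF word_state_in_space[OF w]] word_weight_nonneg[OF w]
      by (auto simp: G_def abs_mult intro!: mult_left_mono order_trans[OF _ abs_ge_self])
  qed simp
  then have "Infinite_Set_Sum.abs_summable_on G W"
    using abs_summable_equivalent by blast
  then show integrable: "integrable (count_space W) (\<lambda>w. word_weight w * \<phi> (word_state w))"
    by (simp add: abs_summable_on_def G_def)
  have "(G has_sum infsum G W) W"
    using abs_summable_summable[OF norm_summable] by simp
  then have "(G \<circ> snd has_sum infsum G W) (SIGMA m:UNIV. eta_words m)"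
    unfolding words_eq_Sigma by (simp add: has_sum_reindex[OF inj_on_snd_eta_words])
  then have "((\<lambda>m. sum G (eta_words m)) has_sum infsum G W) UNIV"
    by (rule has_sum_SigmaD) (simp add: finite_eta_words)
  then have "eta_term (Qop k A P \<phi>) sums infsum G W"
    by (simp add: G_def sum_eta_words has_sum_imp_sums)
  then have "infsum G W = eta_series (Qop k A P \<phi>)"
    by (simp add: eta_series_def sums_unique)
  moreover have "(\<integral>w. G w \<partial>count_space W) = infsum G W"
    using infsetsum_infsum[OF \<open>Infinite_Set_Sum.abs_summable_on G W\<close>] by (simp add: infsetsum_def)
  ultimately show "(\<integral>w. word_weight w * \<phi> (word_state w) \<partial>count_space W) = eta_series (Qop k A P \<phi>)"
    by (simp add: G_def)
qed

lemma eta_eq_distr: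
  "eta k Sing Inv A P q = distr (density (count_space W) word_weight) (state_space k) word_state"
  by (simp add: eta_def word_weight_def word_state_def[abs_def])

lemma measurable_word_state: "word_state \<in> density (count_space W) word_weight \<rightarrow>\<^sub>M state_space k"
  using word_state_in_space by (auto simp: measurable_def)

lemma integral_eta:
  assumes \<phi>: "\<phi> \<in> borel_measurable (state_space k)"
    and B: "\<And>x. x \<in> space (state_space k) \<Longrightarrow> \<bar>\<phi> x\<bar> \<le> B"
  shows "(\<integral>x. \<phi> x \<partial>eta k Sing Inv A P q) = eta_series \<phi>"
proof -
  have "(\<integral>x. \<phi> x \<partial>eta k Sing Inv A P q) = (\<integral>w. \<phi> (word_state w) \<partial>density (count_space W) word_weight)"
    unfolding eta_eq_distr by (rule integral_distr[OF measurable_word_state \<phi>])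
  also have "\<dots> = (\<integral>w. word_weight w * \<phi> (word_state w) \<partial>count_space W)"
    using word_weight_nonneg by (subst integral_density) (auto simp: AE_count_space)
  also have "\<dots> = eta_series \<phi>"
    using integral_count_space_words(2)[OF B] eta_series_Qop[OF B] by simp
  finally show ?thesis .
qed

lemma sets_eta: "sets (eta k Sing Inv A P q) = sets (state_space k)"
  by (simp add: eta_eq_distr)

lemma prob_space_eta: "prob_space (eta k Sing Inv A P q)"
proof (rule prob_spaceI)
  have one: "\<And>x. x \<in> space (state_space k) \<Longrightarrow> \<bar>(\<lambda>_. 1::real) x\<bar> \<le> 1" by simp
  have "eta_series (Qop k A P (\<lambda>_. 1)) = 1"
    using eta_series_Qop[OF one] eta_term_one_sums by (simp add: eta_series_def sums_unique[symmetric])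
  then have total: "(\<integral>w. word_weight w \<partial>count_space W) = 1"
    using integral_count_space_words(2)[OF one] by simp
  have "space (eta k Sing Inv A P q) = space (state_space k)"
    by (simp add: eta_eq_distr)
  then have "emeasure (eta k Sing Inv A P q) (space (eta k Sing Inv A P q))
      = emeasure (density (count_space W) word_weight)
          (word_state -` space (state_space k) \<inter> space (density (count_space W) word_weight))"
    unfolding eta_eq_distr by (simp only: emeasure_distr[OF measurable_word_state sets.top])
  also have "word_state -` space (state_space k) \<inter> space (density (count_space W) word_weight) = W"
    using word_state_in_space by (auto simp del: space_state_space)
  also have "emeasure (density (count_space W) word_weight) W = (\<integral>\<^sup>+ w. ennreal (word_weight w) \<partial>count_space W)"
    by (subst emeasure_density) (auto intro!: nn_integral_cong simp: indicator_def)
  also have "\<dots> = ennreal (\<integral>w. word_weight w \<partial>count_space W)"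
    using integral_count_space_words(1)[OF one] word_weight_nonneg
    by (intro nn_integral_eq_integral) (auto simp: AE_count_space)
  finally show "emeasure (eta k Sing Inv A P q) (space (eta k Sing Inv A P q)) = 1"
    using total by simp
qed

lemma stationary_prob_eta: "stationary_prob k A P (eta k Sing Inv A P q)"
  unfolding stationary_prob_def stationary_def
proof (intro conjI sets_eta prob_space_eta ballI impI)
  fix \<phi> :: "nat \<times> real \<Rightarrow> real" assume \<phi>: "\<phi> \<in> borel_measurable (state_space k)"
    and "\<exists>B. \<forall>x\<in>space (state_space k). \<bar>\<phi> x\<bar> \<le> B"
  then obtain B where B: "\<And>x. x \<in> space (state_space k) \<Longrightarrow> \<bar>\<phi> x\<bar> \<le> B" by blast
  show "(\<integral>x. Qop k A P \<phi> x \<partial>eta k Sing Inv A P q) = (\<integral>x. \<phi> x \<partial>eta k Sing Inv A P q)"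
    using integral_eta[OF measurable_Qop[OF regular \<phi>] Qop_bounded[OF stochastic regular B]]
      integral_eta[OF \<phi> B] eta_series_Qop[OF B] by simp
qed

lemma stationary_prob_unique:
  assumes \<mu>: "stationary_prob k A P \<mu>"
  shows "\<mu> = eta k Sing Inv A P q"
proof (rule measure_eqI)
  have sets: "sets \<mu> = sets (state_space k)" and "prob_space \<mu>"
    using \<mu> by (auto simp: stationary_prob_def)
  then show "sets \<mu> = sets (eta k Sing Inv A P q)" by (simp add: sets_eta)
  interpret \<mu>: prob_space \<mu> by fact
  interpret \<eta>: prob_space "eta k Sing Inv A P q" by (rule prob_space_eta)
  fix X assume X: "X \<in> sets \<mu>"
  then have X': "X \<in> sets (eta k Sing Inv A P q)" by (simp add: sets sets_eta)
  have bounded: "\<And>x. x \<in> space (state_space k) \<Longrightarrow> \<bar>indicator X x :: real\<bar> \<le> 1"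
    by (simp add: indicator_def)
  have indicator_measurable: "indicator X \<in> borel_measurable (state_space k)"
    using X sets by simp
  have "measure \<mu> X = (\<integral>x. indicator X x \<partial>\<mu>)"
    using X by simp
  also have "\<dots> = (\<integral>x. indicator X x \<partial>eta k Sing Inv A P q)"
    using stationary_integral_eq_eta_series[OF \<mu> indicator_measurable bounded]
      integral_eta[OF indicator_measurable bounded] by simp
  also have "\<dots> = measure (eta k Sing Inv A P q) X"
    using X' by simp
  finally show "emeasure \<mu> X = emeasure (eta k Sing Inv A P q) X"
    using X X' by (simp add: \<mu>.emeasure_eq_measure \<eta>.emeasure_eq_measure)
qed

end

theorem corollary2p1:
  fixes k :: nat and Sing Inv :: "nat set"
    and A :: "nat \<Rightarrow> real^2^2" and P :: "nat \<Rightarrow> nat \<Rightarrow> real" and q :: "nat \<Rightarrow> real"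
  assumes part: "Sing \<union> Inv = {1..k}" "Sing \<inter> Inv = {}"
    and nonempty: "Sing \<noteq> {}" "Inv \<noteq> {}"
    and sing: "\<forall>i\<in>Sing. rank (A i) = 1"
    and inv: "\<forall>i\<in>Inv. invertible (A i)"
    and stoch: "left_stochastic k P"
    and prim: "primitive k P"
    and q_prob: "\<forall>i\<in>{1..k}. 0 \<le> q i" "(\<Sum>i\<in>{1..k}. q i) = 1"
    and q_stat: "\<forall>i\<in>{1..k}. (\<Sum>j\<in>{1..k}. P i j * q j) = q i"
  shows "(\<exists>!\<mu>. stationary_prob k A P \<mu>) \<and> stationary_prob k A P (eta k Sing Inv A P q)"
proof -
  interpret markov_cocycle k Sing Inv P q A
    using assms by unfold_locales auto
  show ?thesis
    using stationary_prob_eta stationary_prob_unique by blast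
qed

end
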